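(* Let $n = p^l$ where $p$ is prime and $l$ is a positive integer, and let $G$ be a subgroup of $U(n)$. Then for every $\vec v \in S(n)$, $\lambda(G)$ divides $\#\mathrm{Orb}(G;\vec v)$.
   Context: $U(n)$ is the group (under matrix multiplication) of $2\times 2$ matrices $\begin{bmatrix} a & b \\ 0 & 1\end{bmatrix}$ with $a \in (\mathbb{Z}/n\mathbb{Z})^\times$ and $b \in \mathbb{Z}/n\mathbb{Z}$. $S(n)$ is the set of column vectors $\begin{bmatrix} j \\ 1\end{bmatrix}$ with $j \in \mathbb{Z}/n\mathbb{Z}$, on which $U(n)$ acts by matrix–vector multiplication: $\begin{bmatrix} a & b \\ 0 & 1\end{bmatrix}\begin{bmatrix} j \\ 1\end{bmatrix} = \begin{bmatrix} aj+b \\ 1\end{bmatrix}$. $\mathrm{Orb}(G;\vec v)$ is the orbit of $\vec v$ under $G$, and $\#X$ is the cardinality of $X$. $\lambda(G)$ is the minimum of $\#\mathrm{Orb}(G;\vec v)$ over $\vec v \in S(n)$. *)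

theory Defs
  imports "HOL-Algebra.Group" "HOL-Computational_Algebra.Primes"
begin

text \<open>Elements of Z/nZ are represented by their residues in {0..<n}.
  The matrix [[a,b],[0,1]] is represented by the pair (a,b).
  Matrix product [[a,b],[0,1]][[c,d],[0,1]] = [[ac, ad+b],[0,1]].\<close>

definition Ugrp :: "nat \<Rightarrow> (nat \<times> nat) monoid" where
  "Ugrp n = \<lparr> carrier = {(a, b). a < n \<and> b < n \<and> coprime a n},
              monoid.mult = (\<lambda>(a, b) (c, d). ((a * c) mod n, (a * d + b) mod n)),
              monoid.one = (1 mod n, 0) \<rparr>"

text \<open>S(n): the column vector [j,1] is represented by j in {0..<n}.\<close>
definition Sn :: "nat \<Rightarrow> nat set" where
  "Sn n = {0..<n}"

definition act :: "nat \<Rightarrow> nat \<times> nat \<Rightarrow> nat \<Rightarrow> nat" where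
  "act n g j = (fst g * j + snd g) mod n"

definition Orb :: "nat \<Rightarrow> (nat \<times> nat) set \<Rightarrow> nat \<Rightarrow> nat set" where
  "Orb n G v = (\<lambda>g. act n g v) ` G"

definition lam :: "nat \<Rightarrow> (nat \<times> nat) set \<Rightarrow> nat" where
  "lam n G = Min ((\<lambda>v. card (Orb n G v)) ` Sn n)"

end

theory Submission
  imports Defs "HOL-Algebra.Group_Action" "HOL-Number_Theory.Cong"
begin

(* Let T be the group of translations j \<mapsto> j + b lying in G. Since T acts freely, each T-orbit has
   |T| elements, and every G-orbit is a disjoint union of T-orbits; so |T| divides every orbit size.
   If G contains some j \<mapsto> a j + b with a \<noteq> 1 (mod p), then a - 1 is a unit modulo p^l, this map
   has a fixed point c, and a commutator computation shows that the G-orbit of c is its T-orbit;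
   hence |T| is the least orbit size. Otherwise every linear part is 1 (mod p), so G lies in a
   subgroup of p-power order, all orbit sizes are powers of p, and the least one divides the others. *)

lemma Ugrp_carrier: "carrier (Ugrp n) = {(a, b). a < n \<and> b < n \<and> coprime a n}"
  by (simp add: Ugrp_def)

lemma Ugrp_mult: "x \<otimes>\<^bsub>Ugrp n\<^esub> y = (fst x * fst y mod n, (fst x * snd y + snd x) mod n)"
  by (simp add: Ugrp_def split: prod.split)

lemma Ugrp_one: "\<one>\<^bsub>Ugrp n\<^esub> = (1 mod n, 0)"
  by (simp add: Ugrp_def)

lemma act_Ugrp_mult: "act n (x \<otimes>\<^bsub>Ugrp n\<^esub> y) j = act n x (act n y j)"
proof -
  have "[fst x * fst y mod n * j + (fst x * snd y + snd x) mod n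
      = fst x * fst y * j + (fst x * snd y + snd x)] (mod n)"
    by (intro cong_add cong_scalar_right) (simp_all add: cong_def)
  moreover have "[fst x * ((fst y * j + snd y) mod n) + snd x
      = fst x * (fst y * j + snd y) + snd x] (mod n)"
    by (intro cong_add cong_scalar_left) (simp_all add: cong_def)
  ultimately show ?thesis
    by (simp add: act_def Ugrp_mult cong_def algebra_simps)
qed

lemma act_eq_iff_cong: "k < n \<Longrightarrow> act n g j = k \<longleftrightarrow> [fst g * j + snd g = k] (mod n)"
  by (simp add: act_def cong_def)

lemma ex_affine_fixed_point:
  fixes a b n w :: nat
  assumes "0 < n" "1 \<le> a" "[(a - 1) * w = 1] (mod n)"
  shows "\<exists>c<n. [a * c + b = c] (mod n)"
proof -
  define c where "c = w * (n - 1) * b mod n"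
  have "int n dvd int c - int w * (int n - 1) * int b"
    using assms(1) by (simp add: c_def of_nat_mod of_nat_diff mod_eq_dvd_iff[symmetric] mod_mod_cancel)
  moreover have "int n dvd (int a - 1) * int w - 1"
    using assms(2,3) cong_int_iff[of "(a - 1) * w" 1 n] by (simp add: of_nat_diff cong_iff_dvd_diff)
  moreover have "int a * int c + int b - int c
      = (int a - 1) * (int c - int w * (int n - 1) * int b)
        + ((int a - 1) * int w - 1) * ((int n - 1) * int b) + int n * int b"
    by (simp add: algebra_simps)
  ultimately have "[int (a * c + b) = int c] (mod int n)"
    by (simp add: cong_iff_dvd_diff)
  then have "[a * c + b = c] (mod n)"
    by (simp only: cong_int_iff)
  moreover have "c < n"
    using assms(1) by (simp add: c_def)
  ultimately show ?thesis
    by blast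
qed

(* Since c is fixed by j \<mapsto> a j + b, the displacement d of x is (a - 1)(x - c). *)
lemma cong_from_affine_displacement:
  fixes a b c d x w :: nat
  assumes "1 \<le> a" "[a * c + b = c] (mod n)" "[x + d = a * x + b] (mod n)"
    and "[(a - 1) * w = 1] (mod n)"
  shows "[c + w * d = x] (mod n)"
proof -
  have "int n dvd int a * int c + int b - int c"
    using assms(2) cong_int_iff[of "a * c + b" c n] by (simp add: cong_iff_dvd_diff)
  moreover have "int n dvd int x + int d - (int a * int x + int b)"
    using assms(3) cong_int_iff[of "x + d" "a * x + b" n] by (simp add: cong_iff_dvd_diff)
  moreover have "int n dvd (int a - 1) * int w - 1"
    using assms(1,4) cong_int_iff[of "(a - 1) * w" 1 n] by (simp add: of_nat_diff cong_iff_dvd_diff)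
  moreover have "int c + int w * int d - int x
      = int w * (int x + int d - (int a * int x + int b)) + int w * (int a * int c + int b - int c)
        + ((int a - 1) * int w - 1) * (int x - int c)"
    by (simp add: algebra_simps)
  ultimately have "[int (c + w * d) = int x] (mod int n)"
    by (simp add: cong_iff_dvd_diff)
  then show ?thesis
    by (simp only: cong_int_iff)
qed

lemma card_cong_one_less_mult:
  fixes m k :: nat
  assumes "1 < m"
  shows "card {a. a < m * k \<and> [a = 1] (mod m)} = k"
proof -
  have "{a. a < m * k \<and> [a = 1] (mod m)} = (\<lambda>i. m * i + 1) ` {..<k}"
  proof (intro Set.set_eqI iffI)
    fix a assume "a \<in> {a. a < m * k \<and> [a = 1] (mod m)}"
    then have "a < m * k" "a mod m = 1"
      using assms by (auto simp: cong_def)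
    then have "a = m * (a div m) + 1" "a div m < k"
      by (metis mult_div_mod_eq, simp add: less_mult_imp_div_less mult.commute)
    then show "a \<in> (\<lambda>i. m * i + 1) ` {..<k}"
      by (metis imageI lessThan_iff)
  next
    fix a assume "a \<in> (\<lambda>i. m * i + 1) ` {..<k}"
    then obtain i where i: "i < k" "a = m * i + 1"
      by blast
    have "m * i + 1 < m * (i + 1)"
      using assms by simp
    also have "\<dots> \<le> m * k"
      using i(1) by (intro mult_le_mono2) simp
    moreover have "[m * i + 1 = 0 + 1] (mod m)"
      by (intro cong_add) (simp_all add: cong_def)
    ultimately show "a \<in> {a. a < m * k \<and> [a = 1] (mod m)}"
      using i(2) by simp
  qed
  moreover have "inj_on (\<lambda>i. m * i + 1) {..<k}"
    using assms by (intro inj_onI) simp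
  ultimately show ?thesis
    by (simp add: card_image)
qed

lemma Min_eq_if_dvd:
  fixes F :: "nat set"
  assumes "finite F" "m \<in> F" "\<forall>x\<in>F. m dvd x" "0 \<notin> F"
  shows "Min F = m"
proof (rule Min_eqI)
  fix x assume "x \<in> F"
  then show "m \<le> x"
    using assms(3,4) by (metis dvd_imp_le gr0I)
qed (use assms in auto)

lemma Min_dvd_if_prime_powers:
  fixes F :: "nat set"
  assumes "finite F" "x \<in> F" "1 < p" "\<forall>y\<in>F. \<exists>i. y = p ^ i"
  shows "Min F dvd x"
proof -
  have "Min F \<in> F" "Min F \<le> x"
    using assms(1,2) Min_in Min_le by blast+
  moreover obtain i j where "Min F = p ^ i" "x = p ^ j"
    using assms(2,4) \<open>Min F \<in> F\<close> by metis
  ultimately have "i \<le> j"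
    using power_le_imp_le_exp[OF assms(3)] by simp
  then show ?thesis
    using \<open>Min F = p ^ i\<close> \<open>x = p ^ j\<close> by (simp add: le_imp_power_dvd)
qed

lemma (in group) card_subgroup_dvd:
  assumes "subgroup H G" "subgroup K G" "H \<subseteq> K"
  shows "card H dvd card K"
proof -
  interpret K: group "G\<lparr>carrier := K\<rparr>"
    using subgroup_imp_group[OF assms(2)] .
  have "card (rcosets\<^bsub>G\<lparr>carrier := K\<rparr>\<^esub> H) * card H = order (G\<lparr>carrier := K\<rparr>)"
    by (rule K.lagrange[OF subgroup_incl[OF assms]])
  then have "card K = card H * card (rcosets\<^bsub>G\<lparr>carrier := K\<rparr>\<^esub> H)"
    by (simp add: order_def mult.commute)
  then show ?thesis
    by (rule dvdI)
qed

definition translation_part :: "(nat \<times> nat) set \<Rightarrow> (nat \<times> nat) set" where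
  "translation_part G = {g \<in> G. fst g = 1}"

locale affine_mod =
  fixes n :: nat and U (structure)
  defines U_def: "U \<equiv> Ugrp n"
  assumes modulus_gt_1: "1 < n"
begin

lemma mem_carrier_iff: "x \<in> carrier U \<longleftrightarrow> fst x < n \<and> snd x < n \<and> coprime (fst x) n"
  by (cases x) (simp add: U_def Ugrp_carrier)

lemma fst_mult: "fst (x \<otimes> y) = fst x * fst y mod n"
  by (simp add: U_def Ugrp_mult)

lemma snd_mult: "snd (x \<otimes> y) = act n x (snd y)"
  by (simp add: U_def Ugrp_mult act_def)

lemma one_eq: "\<one> = (1, 0)"
  using modulus_gt_1 by (simp add: U_def Ugrp_one)

lemma act_mult: "act n (x \<otimes> y) j = act n x (act n y j)"
  by (simp add: U_def act_Ugrp_mult)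

sublocale group U
proof (rule groupI)
  fix x y assume "x \<in> carrier U" "y \<in> carrier U"
  then show "x \<otimes> y \<in> carrier U"
    using modulus_gt_1 by (simp add: mem_carrier_iff fst_mult snd_mult act_def)
next
  show "\<one> \<in> carrier U"
    using modulus_gt_1 by (simp add: mem_carrier_iff one_eq)
next
  fix x y z
  show "x \<otimes> y \<otimes> z = x \<otimes> (y \<otimes> z)"
    by (simp add: prod_eq_iff fst_mult snd_mult act_mult mod_simps mult.assoc)
next
  fix x assume "x \<in> carrier U"
  then show "\<one> \<otimes> x = x"
    by (simp add: prod_eq_iff mem_carrier_iff fst_mult snd_mult one_eq act_def)
next
  fix x assume x: "x \<in> carrier U"
  obtain w where w: "[fst x * w = 1] (mod n)"
    using x cong_solve_coprime_nat by (auto simp: mem_carrier_iff)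
  define a where "a = w mod n"
  have "[a * fst x = w * fst x] (mod n)"
    unfolding a_def by (intro cong_scalar_right) simp
  then have "[a * fst x = 1] (mod n)"
    using w by (simp add: cong_trans mult.commute)
  then have inv_fst: "a * fst x mod n = 1" and "coprime a n"
    using modulus_gt_1 coprime_iff_invertible_nat by (auto simp: cong_def)
  define y where "y = (a, a * (n - snd x) mod n)"
  have "y \<in> carrier U"
    using \<open>coprime a n\<close> modulus_gt_1 by (simp add: y_def a_def mem_carrier_iff)
  moreover have "y \<otimes> x = \<one>"
  proof -
    have "(a * snd x + a * (n - snd x) mod n) mod n = a * (snd x + (n - snd x)) mod n"
      by (simp add: mod_add_right_eq distrib_left)
    also have "\<dots> = 0"
      using x by (simp add: mem_carrier_iff)
    finally show ?thesis
      using inv_fst by (simp add: y_def prod_eq_iff fst_mult snd_mult one_eq act_def)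
  qed
  ultimately show "\<exists>y \<in> carrier U. y \<otimes> x = \<one>" by blast
qed

lemma finite_carrier: "finite (carrier U)"
  by (rule finite_subset[of _ "{..<n} \<times> {..<n}"]) (auto simp: mem_carrier_iff)

lemma act_less: "act n g j < n"
  using modulus_gt_1 by (simp add: act_def)

lemma act_one: "j < n \<Longrightarrow> act n \<one> j = j"
  by (simp add: one_eq act_def)

lemma act_inv_act: "x \<in> carrier U \<Longrightarrow> j < n \<Longrightarrow> act n (inv x) (act n x j) = j"
  by (metis l_inv act_mult act_one)

lemma act_act_inv: "x \<in> carrier U \<Longrightarrow> j < n \<Longrightarrow> act n x (act n (inv x) j) = j"
  by (metis r_inv act_mult act_one)

lemma group_action_act: "group_action U {0..<n} (\<lambda>g. restrict (act n g) {0..<n})"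
proof -
  have bij: "restrict (act n x) {0..<n} \<in> Bij {0..<n}" if x: "x \<in> carrier U" for x
  proof -
    have "bij_betw (act n x) {0..<n} {0..<n}"
      by (rule bij_betw_byWitness[where f' = "act n (inv x)"]) (auto simp: x act_inv_act act_act_inv act_less)
    then show ?thesis
      by (simp add: Bij_def bij_betw_restrict_eq)
  qed
  have "(\<lambda>g. restrict (act n g) {0..<n}) \<in> hom U (BijGroup {0..<n})"
  proof (rule homI)
    fix x y assume "x \<in> carrier U" "y \<in> carrier U"
    then show "restrict (act n (x \<otimes> y)) {0..<n}
        = restrict (act n x) {0..<n} \<otimes>\<^bsub>BijGroup {0..<n}\<^esub> restrict (act n y) {0..<n}"
      using bij by (auto simp: BijGroup_def compose_def act_mult act_less fun_eq_iff)
  qed (simp add: BijGroup_def bij)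
  then show ?thesis
    by (simp add: group_action_def group_hom_def group_hom_axioms_def group_BijGroup is_group)
qed

lemma card_Orb_dvd_card:
  assumes G: "subgroup G U" and w: "w < n"
  shows "card (Orb n G w) dvd card G"
proof -
  interpret G: group_action "U\<lparr>carrier := G\<rparr>" "{0..<n}" "\<lambda>g. restrict (act n g) {0..<n}"
    using group_action.induced_action[OF group_action_act G] .
  have "orbit (U\<lparr>carrier := G\<rparr>) (\<lambda>g. restrict (act n g) {0..<n}) w = Orb n G w"
    using w by (auto simp: orbit_def Orb_def)
  moreover have "card (orbit (U\<lparr>carrier := G\<rparr>) (\<lambda>g. restrict (act n g) {0..<n}) w)
      * card (stabilizer (U\<lparr>carrier := G\<rparr>) (\<lambda>g. restrict (act n g) {0..<n}) w) = card G"
    using G.orbit_stabilizer_theorem w by (simp add: order_def)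
  ultimately show ?thesis
    by (metis dvd_triv_left)
qed

lemma Orb_less: "u \<in> Orb n H w \<Longrightarrow> u < n"
  by (auto simp: Orb_def act_less)

lemma mem_Orb_self: "subgroup H U \<Longrightarrow> u < n \<Longrightarrow> u \<in> Orb n H u"
  by (metis Orb_def act_one image_eqI subgroup.one_closed)

lemma Orb_subset_Orb:
  assumes "subgroup H U" "K \<subseteq> H" "u \<in> Orb n H w"
  shows "Orb n K u \<subseteq> Orb n H w"
proof
  fix z assume "z \<in> Orb n K u"
  then obtain k where "k \<in> K" "z = act n k u" by (auto simp: Orb_def)
  moreover obtain g where "g \<in> H" "u = act n g w" using assms(3) by (auto simp: Orb_def)
  ultimately have "z = act n (k \<otimes> g) w" "k \<otimes> g \<in> H"
    using assms(1,2) by (auto simp: act_mult subgroup.m_closed)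
  then show "z \<in> Orb n H w" by (auto simp: Orb_def)
qed

lemma Orb_eq_if_mem:
  assumes H: "subgroup H U" and u: "u < n" and z: "z \<in> Orb n H u"
  shows "Orb n H z = Orb n H u"
proof
  show "Orb n H z \<subseteq> Orb n H u"
    using Orb_subset_Orb[OF H subset_refl z] .
  obtain h where h: "h \<in> H" "z = act n h u" using z by (auto simp: Orb_def)
  then have "u = act n (inv h) z"
    using H u by (simp add: act_inv_act subgroup.mem_carrier)
  then have "u \<in> Orb n H z"
    using H h by (auto simp: Orb_def subgroup.m_inv_closed)
  then show "Orb n H u \<subseteq> Orb n H z"
    using Orb_subset_Orb[OF H subset_refl] by blast
qed

lemma finite_Orb: "subgroup G U \<Longrightarrow> finite (Orb n G w)"
  using finite_subset[OF subgroup.subset finite_carrier] by (simp add: Orb_def)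

lemma card_Orb_pos: "subgroup G U \<Longrightarrow> w < n \<Longrightarrow> 0 < card (Orb n G w)"
  using finite_Orb mem_Orb_self card_gt_0_iff by blast

lemma subgroup_fst_cong_one:
  assumes "m dvd n"
  shows "subgroup {x \<in> carrier U. [fst x = 1] (mod m)} U"
proof (rule subgroupI)
  have "\<one> \<in> {x \<in> carrier U. [fst x = 1] (mod m)}"
    using one_closed by (simp add: one_eq)
  then show "{x \<in> carrier U. [fst x = 1] (mod m)} \<noteq> {}"
    by blast
next
  fix x assume x: "x \<in> {x \<in> carrier U. [fst x = 1] (mod m)}"
  have "[fst x * fst (inv x) = 1] (mod n)"
    using x fst_mult[of x "inv x"] by (simp add: one_eq cong_def)
  then have "[fst x * fst (inv x) = 1] (mod m)"
    using assms by (rule cong_dvd_modulus_nat)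
  moreover have "[fst (inv x) = fst x * fst (inv x)] (mod m)"
    using x cong_scalar_right[of 1 "fst x" m "fst (inv x)"] by (simp add: cong_sym)
  ultimately have "[fst (inv x) = 1] (mod m)"
    using cong_trans by blast
  then show "inv x \<in> {x \<in> carrier U. [fst x = 1] (mod m)}"
    using x by simp
next
  fix x y
  assume x: "x \<in> {x \<in> carrier U. [fst x = 1] (mod m)}"
    and y: "y \<in> {x \<in> carrier U. [fst x = 1] (mod m)}"
  have "[fst (x \<otimes> y) = fst x * fst y] (mod m)"
    using assms by (simp add: fst_mult cong_def mod_mod_cancel)
  also have "[fst x * fst y = 1 * 1] (mod m)"
    using x y by (intro cong_mult) auto
  finally show "x \<otimes> y \<in> {x \<in> carrier U. [fst x = 1] (mod m)}"
    using x y by simp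
qed auto

lemma translation_part_eq: "G \<subseteq> carrier U \<Longrightarrow>
  translation_part G = G \<inter> {x \<in> carrier U. [fst x = 1] (mod n)}"
  using modulus_gt_1 by (auto simp: translation_part_def mem_carrier_iff cong_def)

lemma subgroup_translation_part: "subgroup G U \<Longrightarrow> subgroup (translation_part G) U"
  using subgroups_Inter_pair[OF _ subgroup_fst_cong_one[OF dvd_refl]]
  by (simp add: translation_part_eq subgroup.subset)

lemma card_Orb_translation_part:
  assumes G: "subgroup G U" and u: "u < n"
  shows "card (Orb n (translation_part G) u) = card (translation_part G)"
proof -
  have "inj_on (\<lambda>g. act n g u) (translation_part G)"
  proof (rule inj_onI)
    fix g h assume g: "g \<in> translation_part G" and h: "h \<in> translation_part G"
      and "act n g u = act n h u"
    then have "[u + snd g = u + snd h] (mod n)"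
      by (simp add: translation_part_def act_def cong_def)
    then have "[snd g = snd h] (mod n)"
      by (simp add: cong_add_lcancel_nat)
    moreover have "snd g < n" "snd h < n"
      using g h G by (auto simp: translation_part_def mem_carrier_iff dest: subgroup.mem_carrier)
    ultimately have "snd g = snd h"
      by (rule cong_less_modulus_unique_nat)
    then show "g = h"
      using g h by (simp add: translation_part_def prod_eq_iff)
  qed
  then show ?thesis by (simp add: Orb_def card_image)
qed

lemma card_translation_part_dvd_card_Orb:
  assumes G: "subgroup G U" and w: "w < n"
  shows "card (translation_part G) dvd card (Orb n G w)"
proof -
  let ?T = "translation_part G"
  have T: "subgroup ?T U" "?T \<subseteq> G"
    using subgroup_translation_part[OF G] by (auto simp: translation_part_def)
  define C where "C = (\<lambda>u. Orb n ?T u) ` Orb n G w"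
  have "\<Union>C = Orb n G w"
    using Orb_subset_Orb[OF G T(2)] mem_Orb_self[OF T(1)] Orb_less by (auto simp: C_def)
  moreover have "card ?T * card C = card (\<Union>C)"
  proof (rule card_partition)
    show "finite C" "finite (\<Union>C)"
      using finite_Orb[OF G] \<open>\<Union>C = Orb n G w\<close> by (simp_all add: C_def)
  next
    fix c assume "c \<in> C"
    then show "card c = card ?T"
      using card_Orb_translation_part[OF G] Orb_less by (auto simp: C_def)
  next
    fix c1 c2 assume "c1 \<in> C" "c2 \<in> C" "c1 \<noteq> c2"
    obtain u1 u2 where u: "c1 = Orb n ?T u1" "c2 = Orb n ?T u2" "u1 < n" "u2 < n"
      using \<open>c1 \<in> C\<close> \<open>c2 \<in> C\<close> Orb_less unfolding C_def by blast
    show "c1 \<inter> c2 = {}"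
    proof (rule ccontr)
      assume "c1 \<inter> c2 \<noteq> {}"
      then obtain z where "z \<in> Orb n ?T u1" "z \<in> Orb n ?T u2"
        using u by blast
      then have "c1 = c2"
        using u Orb_eq_if_mem[OF T(1)] by metis
      with \<open>c1 \<noteq> c2\<close> show False ..
    qed
  qed
  ultimately show ?thesis
    by (metis dvd_triv_left)
qed

lemma fst_mult_inv_eq_one:
  assumes "x \<in> carrier U" "y \<in> carrier U" "fst x = fst y"
  shows "fst (x \<otimes> inv y) = 1"
proof -
  have "fst (x \<otimes> inv y) = fst (y \<otimes> inv y)"
    using assms(3) by (simp add: fst_mult)
  also have "\<dots> = 1"
    using assms(2) by (simp add: one_eq)
  finally show ?thesis .
qed

lemma translation_multiple_mem:
  assumes "subgroup H U" "(1, d) \<in> H"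
  shows "(1, k * d mod n) \<in> H"
proof (induction k)
  case 0
  then show ?case
    using subgroup.one_closed[OF assms(1)] by (simp add: one_eq)
next
  case (Suc k)
  have "(1, d) \<otimes> (1, k * d mod n) = (1, Suc k * d mod n)"
    using modulus_gt_1 by (simp add: prod_eq_iff fst_mult snd_mult act_def mod_add_right_eq add.commute)
  then show ?case
    using subgroup.m_closed[OF assms(1) assms(2) Suc] by simp
qed

lemma act_fixed_point_mem_translation_Orb:
  assumes G: "subgroup G U" and g0: "g0 \<in> G" and g: "g \<in> G"
    and a0: "1 \<le> fst g0" and w: "[(fst g0 - 1) * w = 1] (mod n)"
    and c: "c < n" "act n g0 c = c"
  shows "act n g c \<in> Orb n (translation_part G) c"
proof -
  have g0U: "g0 \<in> carrier U" and gU: "g \<in> carrier U"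
    using G g0 g by (simp_all add: subgroup.mem_carrier)
  define x where "x = act n g c"
  (* f is a translation, as g0 g and g g0 have the same linear part, and it moves x = g c as g0 does *)
  define f where "f = (g0 \<otimes> g) \<otimes> inv (g \<otimes> g0)"
  have "f \<in> G"
    using G g g0 by (simp add: f_def subgroup.m_closed subgroup.m_inv_closed)
  moreover have "fst f = 1"
    unfolding f_def using g0U gU by (intro fst_mult_inv_eq_one) (simp_all add: fst_mult mult.commute)
  ultimately have fT: "f \<in> translation_part G"
    by (simp add: translation_part_def)
  have "act n (g \<otimes> g0) c = x"
    by (simp add: x_def act_mult c(2))
  then have "act n (inv (g \<otimes> g0)) x = c"
    using act_inv_act[of "g \<otimes> g0" c] gU g0U c(1) by simp
  then have "act n f x = act n g0 x"
    by (simp add: f_def act_mult x_def)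
  then have "[x + snd f = fst g0 * x + snd g0] (mod n)"
    using \<open>fst f = 1\<close> by (simp add: act_def cong_def)
  moreover have "[fst g0 * c + snd g0 = c] (mod n)"
    using c by (simp add: act_eq_iff_cong)
  ultimately have "[c + w * snd f = x] (mod n)"
    using cong_from_affine_displacement[OF a0 _ _ w] by blast
  then have "act n (1, w * snd f mod n) c = x"
    by (simp add: act_def cong_def mod_add_right_eq x_def act_less)
  moreover have "(1, w * snd f mod n) \<in> translation_part G"
    using translation_multiple_mem[OF subgroup_translation_part[OF G], of "snd f"] fT \<open>fst f = 1\<close>
    by (metis prod.collapse)
  ultimately show ?thesis
    unfolding Orb_def x_def by (metis image_eqI)
qed

lemma Orb_subset_translation_Orb:
  assumes G: "subgroup G U" and g0: "g0 \<in> G" and unit: "coprime (fst g0 - 1) n"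
  shows "\<exists>c<n. Orb n G c \<subseteq> Orb n (translation_part G) c"
proof -
  have a0: "1 \<le> fst g0"
    using unit modulus_gt_1 by (cases "fst g0") auto
  obtain w where w: "[(fst g0 - 1) * w = 1] (mod n)"
    using unit cong_solve_coprime_nat by fastforce
  obtain c where c: "c < n" "[fst g0 * c + snd g0 = c] (mod n)"
    using ex_affine_fixed_point[OF _ a0 w] modulus_gt_1 by auto
  then have "act n g0 c = c"
    by (simp add: act_eq_iff_cong)
  then show ?thesis
    using act_fixed_point_mem_translation_Orb[OF G g0 _ a0 w c(1)] c(1) by (auto simp: Orb_def)
qed

lemma card_fst_cong_one:
  assumes "prime p" "n = p ^ Suc k"
  shows "card {x \<in> carrier U. [fst x = 1] (mod p)} = p ^ k * n"
proof -
  have "coprime a n" if "[a = 1] (mod p)" for a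
    using cong_imp_coprime[OF cong_sym[OF that]] assms by simp
  then have "{x \<in> carrier U. [fst x = 1] (mod p)} = {a. a < p * p ^ k \<and> [a = 1] (mod p)} \<times> {..<n}"
    using assms(2) by (auto simp: mem_carrier_iff)
  then show ?thesis
    using card_cong_one_less_mult prime_gt_1_nat[OF assms(1)] by (simp add: card_cartesian_product)
qed

lemma card_Orb_prime_power:
  assumes p: "prime p" and n: "n = p ^ l" and G: "subgroup G U"
    and G_cong: "\<forall>g\<in>G. [fst g = 1] (mod p)" and w: "w < n"
  shows "\<exists>i. card (Orb n G w) = p ^ i"
proof -
  obtain k where l: "l = Suc k"
    using n modulus_gt_1 by (cases l) auto
  let ?P = "{x \<in> carrier U. [fst x = 1] (mod p)}"
  have "subgroup ?P U"
    using n l by (intro subgroup_fst_cong_one) simp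
  moreover have "G \<subseteq> ?P"
    using G_cong subgroup.subset[OF G] by blast
  ultimately have "card G dvd p ^ k * n"
    using card_subgroup_dvd[OF G] card_fst_cong_one[OF p n[unfolded l]] by metis
  then have "card (Orb n G w) dvd p ^ (k + l)"
    using card_Orb_dvd_card[OF G w] n by (metis dvd_trans power_add)
  then show ?thesis
    using divides_primepow_nat[OF p] by blast
qed

lemma ex_Orb_card_dvd_all:
  assumes p: "prime p" and n: "n = p ^ l" and G: "subgroup G U"
  shows "\<exists>c<n. \<forall>w<n. card (Orb n G c) dvd card (Orb n G w)"
proof (cases "\<forall>g\<in>G. [fst g = 1] (mod p)")
  case True
  define F where "F = (\<lambda>w. card (Orb n G w)) ` {0..<n}"
  have "finite F" "F \<noteq> {}"
    using modulus_gt_1 by (simp_all add: F_def)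
  then have "Min F \<in> F"
    by (rule Min_in)
  then obtain c where c: "c < n" "Min F = card (Orb n G c)"
    by (auto simp: F_def)
  have "Min F dvd card (Orb n G w)" if "w < n" for w
  proof (rule Min_dvd_if_prime_powers)
    show "card (Orb n G w) \<in> F"
      using that by (simp add: F_def)
    show "\<forall>y\<in>F. \<exists>i. y = p ^ i"
      using card_Orb_prime_power[OF p n G True] by (auto simp: F_def)
  qed (use \<open>finite F\<close> prime_gt_1_nat[OF p] in auto)
  then show ?thesis
    using c by auto
next
  case False
  then obtain g0 where g0: "g0 \<in> G" "\<not> [fst g0 = 1] (mod p)"
    by blast
  have "coprime (fst g0) n"
    using subgroup.mem_carrier[OF G g0(1)] by (simp add: mem_carrier_iff)
  then have "1 \<le> fst g0"
    using modulus_gt_1 by (cases "fst g0") auto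
  then have "\<not> p dvd fst g0 - 1"
    using g0(2) by (simp add: cong_altdef_nat)
  then have "coprime p (fst g0 - 1)"
    by (rule prime_imp_coprime[OF p])
  then have "coprime (fst g0 - 1) n"
    using n by (simp add: coprime_commute)
  then obtain c where c: "c < n" "Orb n G c \<subseteq> Orb n (translation_part G) c"
    using Orb_subset_translation_Orb[OF G g0(1)] by blast
  moreover have "Orb n (translation_part G) c \<subseteq> Orb n G c"
    by (auto simp: Orb_def translation_part_def)
  ultimately have "Orb n G c = Orb n (translation_part G) c"
    by blast
  then have "card (Orb n G c) = card (translation_part G)"
    using card_Orb_translation_part[OF G c(1)] by simp
  then show ?thesis
    using c(1) card_translation_part_dvd_card_Orb[OF G] by auto
qed

end

theorem lemma2p3:
  fixes p l n :: nat and G :: "(nat \<times> nat) set"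
  assumes "prime p" and "l > 0" and "n = p ^ l"
    and "subgroup G (Ugrp n)"
    and "v \<in> Sn n"
  shows "lam n G dvd card (Orb n G v)"
proof -
  have "1 < n"
    unfolding assms(3) using prime_gt_1_nat[OF assms(1)] assms(2) by (rule one_less_power)
  then interpret affine_mod n "Ugrp n"
    by (simp add: affine_mod_def)
  obtain c where c: "c < n" "\<forall>w<n. card (Orb n G c) dvd card (Orb n G w)"
    using ex_Orb_card_dvd_all[OF assms(1,3,4)] by blast
  have "0 \<notin> (\<lambda>v. card (Orb n G v)) ` {0..<n}"
    using card_Orb_pos[OF assms(4)] by (simp add: image_iff)
  then have "lam n G = card (Orb n G c)"
    unfolding lam_def Sn_def by (intro Min_eq_if_dvd) (use c in auto)
  then show ?thesis
    using c assms(5) by (simp add: Sn_def)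
qed

end
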